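(* Let $F^{(a)}(x,y)$ and $F^{(b)}(x,y)$ be homogeneous polynomials of degree $2$ in two variables with nonnegative integer coefficients, and define $a_0=b_0=1$, $a_n=F^{(a)}(a_{n-1},b_{n-1})$, $b_n=F^{(b)}(a_{n-1},b_{n-1})$ for $n\ge 1$. If $a_1=b_1$, then $a_n=b_n$ for all $n\in\mathbb{N}$.
   Context: This is an SNRE of degree $(2,2)$; note that with the convention $a_0=b_0=1$, $a_1$ and $b_1$ equal the sums of the coefficients of $F^{(a)}$ and $F^{(b)}$ respectively. *)

theory Defs
  imports Main
begin

definition hom2 :: "nat \<times> nat \<times> nat \<Rightarrow> nat \<Rightarrow> nat \<Rightarrow> nat" where
  "hom2 c x y = fst c * x^2 + fst (snd c) * x * y + snd (snd c) * y^2"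

fun snre :: "nat \<times> nat \<times> nat \<Rightarrow> nat \<times> nat \<times> nat \<Rightarrow> nat \<Rightarrow> nat \<times> nat" where
  "snre ca cb 0 = (1, 1)"
| "snre ca cb (Suc n) =
     (let (a, b) = snre ca cb n in (hom2 ca a b, hom2 cb a b))"

end

theory Submission
  imports Defs
begin

text \<open>On the diagonal a homogeneous quadratic form is its coefficient sum times x^2.
  Starting from a_0 = b_0 = 1, the condition a_1 = b_1 says the two forms have the same
  coefficient sum, so whenever a_(n-1) = b_(n-1) the next terms coincide as well.\<close>

definition coeff_sum :: "nat \<times> nat \<times> nat \<Rightarrow> nat" where
  "coeff_sum c = fst c + fst (snd c) + snd (snd c)"

lemma hom2_diag: "hom2 c x x = coeff_sum c * x^2"
  by (simp add: hom2_def coeff_sum_def power2_eq_square algebra_simps)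

lemma snre_1: "snre ca cb 1 = (coeff_sum ca, coeff_sum cb)"
  by (simp add: hom2_diag)

lemma snre_diag_if_coeff_sum_eq:
  assumes "coeff_sum ca = coeff_sum cb"
  shows "fst (snre ca cb n) = snd (snre ca cb n)"
proof (induction n)
  case 0
  then show ?case by simp
next
  case (Suc n)
  obtain a b where ab: "snre ca cb n = (a, b)"
    by fastforce
  with Suc have "a = b"
    by simp
  with ab assms show ?case
    by (simp add: hom2_diag)
qed

theorem proposition1:
  fixes ca cb :: "nat \<times> nat \<times> nat"
  assumes "fst (snre ca cb 1) = snd (snre ca cb 1)"
  shows "\<forall>n. fst (snre ca cb n) = snd (snre ca cb n)"
proof
  have "coeff_sum ca = coeff_sum cb"
    using assms by (simp only: snre_1 prod.sel)
  then show "fst (snre ca cb n) = snd (snre ca cb n)" for n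
    by (rule snre_diag_if_coeff_sum_eq)
qed

end
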